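(* Let $(A,\succ,\prec)$ be a finite-dimensional dendriform algebra with associated product $x*y=x\succ y+x\prec y$, and let $r\in A\otimes A$ be symmetric and nondegenerate (i.e. the induced map $r:A^*\to A$ is bijective). Define $\mathcal B(x,y)=\langle r^{-1}(x),y\rangle$ for $x,y\in A$. Then $r$ satisfies the $D$-equation $r_{12}*r_{13}=r_{13}\prec r_{23}+r_{23}\succ r_{12}$ if and only if $$\mathcal B(x*y,z)=\mathcal B(y,z\prec x)+\mathcal B(x,y\succ z)\quad\text{for all }x,y,z\in A.$$
   Context: A dendriform algebra is a vector space with bilinear products $\prec,\succ$ such that, writing $x*y=x\prec y+x\succ y$: $(x\prec y)\prec z=x\prec(y*z)$, $(x\succ y)\prec z=x\succ(y\prec z)$, $x\succ(y\succ z)=(x*y)\succ z$. Symmetric means $\sigma(r)=r$ where $\sigma(u\otimes v)=v\otimes u$. $r$ is regarded as a linear map $A^*\to A$ by $\langle u^*\otimes v^*,r\rangle=\langle u^*,r(v^* )\rangle$. For $r=\sum_i x_i\otimes y_i$: $r_{12}*r_{13}=\sum_{i,j}x_i*x_j\otimes y_i\otimes y_j$, $r_{13}\prec r_{23}=\sum_{i,j}x_i\otimes x_j\otimes y_i\prec y_j$, $r_{23}\succ r_{12}=\sum_{i,j}x_j\otimes x_i\succ y_j\otimes y_i$. *)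

theory Defs
  imports Main
begin

text \<open>A finite-dimensional vector space over a field 'k is modelled in coordinates as
  'n \<Rightarrow> 'k with 'n a finite index type (basis e i). The dual space A* is identified with
  'n \<Rightarrow> 'k via the dual basis, with pairing dpair. Tensors in A\<otimes>A and A\<otimes>A\<otimes>A are
  their coefficient arrays.\<close>

type_synonym ('n, 'k) vect = "'n \<Rightarrow> 'k"

definition vadd :: "('n, 'k::field) vect \<Rightarrow> ('n, 'k) vect \<Rightarrow> ('n, 'k) vect" where
  "vadd x y = (\<lambda>i. x i + y i)"

definition smul :: "'k::field \<Rightarrow> ('n, 'k) vect \<Rightarrow> ('n, 'k) vect" where
  "smul c x = (\<lambda>i. c * x i)"

definition basisv :: "'n \<Rightarrow> ('n, 'k::field) vect" where
  "basisv i = (\<lambda>j. if j = i then 1 else 0)"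

definition bilinear_op :: "(('n, 'k::field) vect \<Rightarrow> ('n, 'k) vect \<Rightarrow> ('n, 'k) vect) \<Rightarrow> bool" where
  "bilinear_op m \<longleftrightarrow>
     (\<forall>x y z. m (vadd x y) z = vadd (m x z) (m y z)) \<and>
     (\<forall>x y z. m x (vadd y z) = vadd (m x y) (m x z)) \<and>
     (\<forall>c x y. m (smul c x) y = smul c (m x y)) \<and>
     (\<forall>c x y. m x (smul c y) = smul c (m x y))"

definition dstar :: "(('n, 'k::field) vect \<Rightarrow> ('n, 'k) vect \<Rightarrow> ('n, 'k) vect) \<Rightarrow>
    (('n, 'k) vect \<Rightarrow> ('n, 'k) vect \<Rightarrow> ('n, 'k) vect) \<Rightarrow> ('n, 'k) vect \<Rightarrow> ('n, 'k) vect \<Rightarrow> ('n, 'k) vect" where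
  "dstar prec succ x y = vadd (prec x y) (succ x y)"

definition dendriform :: "(('n, 'k::field) vect \<Rightarrow> ('n, 'k) vect \<Rightarrow> ('n, 'k) vect) \<Rightarrow>
    (('n, 'k) vect \<Rightarrow> ('n, 'k) vect \<Rightarrow> ('n, 'k) vect) \<Rightarrow> bool" where
  "dendriform prec succ \<longleftrightarrow> bilinear_op prec \<and> bilinear_op succ \<and>
     (\<forall>x y z. prec (prec x y) z = prec x (dstar prec succ y z)) \<and>
     (\<forall>x y z. prec (succ x y) z = succ x (prec y z)) \<and>
     (\<forall>x y z. succ x (succ y z) = succ (dstar prec succ x y) z)"

text \<open>Decomposition r = \<Sum>_(i,j) (r i j \<cdot> e_i) \<otimes> e_j.\<close>

definition rx :: "('n \<Rightarrow> 'n \<Rightarrow> 'k::field) \<Rightarrow> 'n \<times> 'n \<Rightarrow> ('n, 'k) vect" where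
  "rx r p = smul (r (fst p) (snd p)) (basisv (fst p))"

definition ry :: "('n \<Rightarrow> 'n \<Rightarrow> 'k::field) \<Rightarrow> 'n \<times> 'n \<Rightarrow> ('n, 'k) vect" where
  "ry r p = basisv (snd p)"

definition r12_star_r13 where
  "r12_star_r13 prec succ (r :: 'n::finite \<Rightarrow> 'n \<Rightarrow> 'k::field) =
     (\<lambda>a b c. \<Sum>p\<in>UNIV. \<Sum>q\<in>UNIV.
        dstar prec succ (rx r p) (rx r q) a * ry r p b * ry r q c)"

definition r13_prec_r23 where
  "r13_prec_r23 prec (r :: 'n::finite \<Rightarrow> 'n \<Rightarrow> 'k::field) =
     (\<lambda>a b c. \<Sum>p\<in>UNIV. \<Sum>q\<in>UNIV.
        rx r p a * rx r q b * prec (ry r p) (ry r q) c)"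

definition r23_succ_r12 where
  "r23_succ_r12 succ (r :: 'n::finite \<Rightarrow> 'n \<Rightarrow> 'k::field) =
     (\<lambda>a b c. \<Sum>p\<in>UNIV. \<Sum>q\<in>UNIV.
        rx r q a * succ (rx r p) (ry r q) b * ry r p c)"

definition D_equation where
  "D_equation prec succ (r :: 'n::finite \<Rightarrow> 'n \<Rightarrow> 'k::field) \<longleftrightarrow>
     r12_star_r13 prec succ r =
       (\<lambda>a b c. r13_prec_r23 prec r a b c + r23_succ_r12 succ r a b c)"

definition dpair :: "('n::finite, 'k::field) vect \<Rightarrow> ('n, 'k) vect \<Rightarrow> 'k" where
  "dpair u x = (\<Sum>i\<in>UNIV. u i * x i)"

text \<open>r as a map A* \<rightarrow> A: \<langle>u*\<otimes>v*, r\<rangle> = \<langle>u*, r(v*)\<rangle>.\<close>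
definition rmap :: "('n::finite \<Rightarrow> 'n \<Rightarrow> 'k::field) \<Rightarrow> ('n, 'k) vect \<Rightarrow> ('n, 'k) vect" where
  "rmap r v = (\<lambda>i. \<Sum>j\<in>UNIV. r i j * v j)"

definition tensor_symmetric :: "('n \<Rightarrow> 'n \<Rightarrow> 'k) \<Rightarrow> bool" where
  "tensor_symmetric r \<longleftrightarrow> (\<forall>i j. r i j = r j i)"

definition bform :: "('n::finite \<Rightarrow> 'n \<Rightarrow> 'k::field) \<Rightarrow> ('n, 'k) vect \<Rightarrow> ('n, 'k) vect \<Rightarrow> 'k" where
  "bform r x y = dpair (inv (rmap r) x) y"

end

theory Submission imports Defs begin

(* Write col b = r(-,b) and row a = r(a,-) for the columns and rows of the
   coefficient matrix of r; for symmetric r they coincide.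
   (1) Tensor side: by bilinearity the three tensors of the D-equation have coefficients
       (col b * col c)_a, (row a < row b)_c and (col c > row a)_b, so the D-equation is an
       identity between these coefficient arrays (D_equation_coordinates).
   (2) Form side: substituting x = r(v), y = r(w), z = r(u) (r is bijective) turns every
       term of the B-identity into a trilinear expression sum u_a v_b w_c T(a,b,c) in the
       dual coordinates, whose coefficient array T is exactly one of the arrays in (1).
   (3) A trilinear expression determines its coefficient array (evaluate at dual basis
       vectors), so both conditions say the same thing about these arrays. *)

lemma bilinear_op_flip: "bilinear_op m \<Longrightarrow> bilinear_op (\<lambda>x y. m y x)"
  unfolding bilinear_op_def by auto

lemma bilinear_op_zero_left:
  assumes "bilinear_op m" shows "m (\<lambda>i. 0) y = (\<lambda>a. 0)"
proof -
  have "m (smul 0 y) y = smul 0 (m y y)" using assms by (simp add: bilinear_op_def)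
  moreover have "smul 0 y = (\<lambda>i. 0)" by (simp add: smul_def)
  ultimately show ?thesis by (simp add: smul_def)
qed

lemma bilinear_op_sum_left:
  assumes "bilinear_op m" "finite S"
  shows "m (\<lambda>i. \<Sum>s\<in>S. c s * f s i) y = (\<lambda>a. \<Sum>s\<in>S. c s * m (f s) y a)"
  using assms(2)
proof (induction S rule: finite_induct)
  case empty
  then show ?case using bilinear_op_zero_left[OF assms(1)] by simp
next
  case (insert s F)
  have split: "(\<lambda>i. \<Sum>t\<in>insert s F. c t * f t i)
      = vadd (smul (c s) (f s)) (\<lambda>i. \<Sum>t\<in>F. c t * f t i)"
    using insert by (simp add: vadd_def smul_def)
  show ?case using insert assms(1) unfolding split by (simp add: bilinear_op_def vadd_def smul_def)
qed

lemma bilinear_op_sum_right: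
  assumes "bilinear_op m" "finite S"
  shows "m x (\<lambda>i. \<Sum>s\<in>S. c s * f s i) = (\<lambda>a. \<Sum>s\<in>S. c s * m x (f s) a)"
  using bilinear_op_sum_left[OF bilinear_op_flip[OF assms(1)] assms(2)] .

lemma bilinear_op_sum_sum:
  assumes "bilinear_op m" "finite S" "finite T"
  shows "m (\<lambda>i. \<Sum>s\<in>S. c s * f s i) (\<lambda>i. \<Sum>t\<in>T. d t * g t i) a
       = (\<Sum>s\<in>S. \<Sum>t\<in>T. c s * d t * m (f s) (g t) a)"
proof -
  have "m (\<lambda>i. \<Sum>s\<in>S. c s * f s i) (\<lambda>i. \<Sum>t\<in>T. d t * g t i) a
      = (\<Sum>s\<in>S. c s * m (f s) (\<lambda>i. \<Sum>t\<in>T. d t * g t i) a)"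
    by (simp only: bilinear_op_sum_left[OF assms(1,2)])
  also have "\<dots> = (\<Sum>s\<in>S. \<Sum>t\<in>T. c s * (d t * m (f s) (g t) a))"
    by (simp only: bilinear_op_sum_right[OF assms(1,3)] sum_distrib_left)
  finally show ?thesis by (simp only: mult.assoc)
qed

lemma bilinear_op_dstar: "bilinear_op p \<Longrightarrow> bilinear_op s \<Longrightarrow> bilinear_op (dstar p s)"
  unfolding bilinear_op_def dstar_def by (auto simp: vadd_def smul_def algebra_simps)

definition rcol :: "('n \<Rightarrow> 'n \<Rightarrow> 'k) \<Rightarrow> 'n \<Rightarrow> ('n, 'k) vect" where
  "rcol r b = (\<lambda>i. r i b)"

definition rrow :: "('n \<Rightarrow> 'n \<Rightarrow> 'k) \<Rightarrow> 'n \<Rightarrow> ('n, 'k) vect" where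
  "rrow r a = (\<lambda>i. r a i)"

lemma rrow_eq_rcol: "tensor_symmetric r \<Longrightarrow> rrow r = rcol r"
  by (auto simp: tensor_symmetric_def rrow_def rcol_def)

lemma sum_ry_rx: "(\<lambda>i. \<Sum>p\<in>UNIV. ry r p b * rx r p i) = rcol r (b::'n::finite)"
proof
  fix i
  have "(\<Sum>p\<in>UNIV. ry r p b * rx r p i) = (\<Sum>x\<in>UNIV. \<Sum>y\<in>UNIV. ry r (x, y) b * rx r (x, y) i)"
    by (simp add: sum.cartesian_product' flip: UNIV_Times_UNIV)
  also have "\<dots> = (\<Sum>x\<in>UNIV. \<Sum>y\<in>UNIV. if y = b then if x = i then r x y else 0 else 0)"
    by (intro sum.cong refl) (auto simp: ry_def rx_def smul_def basisv_def)
  finally show "(\<Sum>p\<in>UNIV. ry r p b * rx r p i) = rcol r b i" by (simp add: rcol_def)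
qed

lemma sum_rx_ry: "(\<lambda>i. \<Sum>p\<in>UNIV. rx r p a * ry r p i) = rrow r (a::'n::finite)"
proof
  fix i
  have "(\<Sum>p\<in>UNIV. rx r p a * ry r p i) = (\<Sum>x\<in>UNIV. \<Sum>y\<in>UNIV. rx r (x, y) a * ry r (x, y) i)"
    by (simp add: sum.cartesian_product' flip: UNIV_Times_UNIV)
  also have "\<dots> = (\<Sum>x\<in>UNIV. \<Sum>y\<in>UNIV. if y = i then if x = a then r x y else 0 else 0)"
    by (intro sum.cong refl) (auto simp: ry_def rx_def smul_def basisv_def)
  finally show "(\<Sum>p\<in>UNIV. rx r p a * ry r p i) = rrow r a i" by (simp add: rrow_def)
qed

lemma r12_star_r13_coeff:
  assumes "bilinear_op (dstar prec succ)"
  shows "r12_star_r13 prec succ r a b c = dstar prec succ (rcol r b) (rcol r c) a"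
proof -
  have "dstar prec succ (rcol r b) (rcol r c) a = dstar prec succ
      (\<lambda>i. \<Sum>p\<in>UNIV. ry r p b * rx r p i) (\<lambda>i. \<Sum>q\<in>UNIV. ry r q c * rx r q i) a"
    by (simp only: sum_ry_rx)
  also have "\<dots> = (\<Sum>p\<in>UNIV. \<Sum>q\<in>UNIV. ry r p b * ry r q c * dstar prec succ (rx r p) (rx r q) a)"
    by (rule bilinear_op_sum_sum[OF assms finite finite])
  finally show ?thesis by (simp add: r12_star_r13_def mult_ac)
qed

lemma r13_prec_r23_coeff:
  assumes "bilinear_op prec"
  shows "r13_prec_r23 prec r a b c = prec (rrow r a) (rrow r b) c"
proof -
  have "prec (rrow r a) (rrow r b) c = prec
      (\<lambda>i. \<Sum>p\<in>UNIV. rx r p a * ry r p i) (\<lambda>i. \<Sum>q\<in>UNIV. rx r q b * ry r q i) c"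
    by (simp only: sum_rx_ry)
  also have "\<dots> = (\<Sum>p\<in>UNIV. \<Sum>q\<in>UNIV. rx r p a * rx r q b * prec (ry r p) (ry r q) c)"
    by (rule bilinear_op_sum_sum[OF assms finite finite])
  finally show ?thesis by (simp add: r13_prec_r23_def)
qed

lemma r23_succ_r12_coeff:
  assumes "bilinear_op succ"
  shows "r23_succ_r12 succ r a b c = succ (rcol r c) (rrow r a) b"
proof -
  have "succ (rcol r c) (rrow r a) b = succ
      (\<lambda>i. \<Sum>p\<in>UNIV. ry r p c * rx r p i) (\<lambda>i. \<Sum>q\<in>UNIV. rx r q a * ry r q i) b"
    by (simp only: sum_ry_rx sum_rx_ry)
  also have "\<dots> = (\<Sum>p\<in>UNIV. \<Sum>q\<in>UNIV. ry r p c * rx r q a * succ (rx r p) (ry r q) b)"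
    by (rule bilinear_op_sum_sum[OF assms finite finite])
  finally show ?thesis by (simp add: r23_succ_r12_def mult_ac)
qed

lemma D_equation_coordinates:
  assumes "bilinear_op prec" "bilinear_op succ"
  shows "D_equation prec succ r \<longleftrightarrow> (\<forall>a b c. dstar prec succ (rcol r b) (rcol r c) a
      = prec (rrow r a) (rrow r b) c + succ (rcol r c) (rrow r a) b)"
  unfolding D_equation_def fun_eq_iff
  by (simp add: r12_star_r13_coeff[OF bilinear_op_dstar[OF assms]]
      r13_prec_r23_coeff[OF assms(1)] r23_succ_r12_coeff[OF assms(2)])

definition trisum :: "('n::finite \<Rightarrow> 'n \<Rightarrow> 'n \<Rightarrow> 'k::field) \<Rightarrow>
    ('n, 'k) vect \<Rightarrow> ('n, 'k) vect \<Rightarrow> ('n, 'k) vect \<Rightarrow> 'k" where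
  "trisum T u v w = (\<Sum>a\<in>UNIV. \<Sum>b\<in>UNIV. \<Sum>c\<in>UNIV. u a * v b * w c * T a b c)"

lemma trisum_rotate: "trisum T u v w = trisum (\<lambda>b c a. T a b c) v w u"
proof -
  have "trisum T u v w = (\<Sum>b\<in>UNIV. \<Sum>a\<in>UNIV. \<Sum>c\<in>UNIV. u a * v b * w c * T a b c)"
    unfolding trisum_def by (rule sum.swap)
  also have "\<dots> = (\<Sum>b\<in>UNIV. \<Sum>c\<in>UNIV. \<Sum>a\<in>UNIV. u a * v b * w c * T a b c)"
    by (rule sum.cong[OF refl], rule sum.swap)
  finally show ?thesis by (simp add: trisum_def mult_ac)
qed

lemma trisum_add: "trisum T u v w + trisum T' u v w = trisum (\<lambda>a b c. T a b c + T' a b c) u v w"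
  by (simp add: trisum_def distrib_left sum.distrib)

lemma sum_basisv: "(\<Sum>i\<in>UNIV. basisv (a::'n::finite) i * f i) = (f a :: 'k::field)"
proof -
  have "(\<Sum>i\<in>UNIV. basisv a i * f i) = (\<Sum>i\<in>UNIV. if i = a then f i else 0)"
    unfolding basisv_def by (rule sum.cong) auto
  then show ?thesis by simp
qed

lemma trisum_basis: "trisum T (basisv a) (basisv b) (basisv c) = T a b c"
proof -
  have "trisum T (basisv a) (basisv b) (basisv c) = (\<Sum>a'\<in>UNIV. basisv a a' *
      (\<Sum>b'\<in>UNIV. basisv b b' * (\<Sum>c'\<in>UNIV. basisv c c' * T a' b' c')))"
    by (simp add: trisum_def sum_distrib_left mult.assoc)
  then show ?thesis by (simp only: sum_basisv)
qed

lemma trisum_eq_iff: "(\<forall>u v w. trisum T u v w = trisum T' u v w) \<longleftrightarrow> (\<forall>a b c. T a b c = T' a b c)"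
proof
  assume "\<forall>u v w. trisum T u v w = trisum T' u v w"
  then show "\<forall>a b c. T a b c = T' a b c" by (metis trisum_basis)
qed (simp add: trisum_def)

lemma rmap_as_sum: "rmap r v = (\<lambda>i. \<Sum>b\<in>UNIV. v b * rcol r b i)"
  by (simp add: rmap_def rcol_def mult.commute)

lemma dpair_bilinear_rmap:
  assumes "bilinear_op m"
  shows "dpair t (m (rmap r p) (rmap r q)) = trisum (\<lambda>i j k. m (rcol r j) (rcol r k) i) t p q"
  unfolding rmap_as_sum dpair_def trisum_def
  by (simp add: bilinear_op_sum_sum[OF assms] sum_distrib_left mult_ac)

lemma bform_rmap_left: "bij (rmap r) \<Longrightarrow> bform r (rmap r v) y = dpair v y"
  by (simp add: bform_def bij_is_inj)

lemma dpair_rmap_sym: "tensor_symmetric r \<Longrightarrow> dpair (rmap r v) u = dpair v (rmap r u)"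
proof -
  assume sym: "tensor_symmetric r"
  have "dpair (rmap r v) u = (\<Sum>i\<in>UNIV. \<Sum>j\<in>UNIV. u i * r i j * v j)"
    by (simp add: dpair_def rmap_def sum_distrib_left sum_distrib_right mult_ac)
  also have "\<dots> = (\<Sum>j\<in>UNIV. \<Sum>i\<in>UNIV. u i * r i j * v j)" by (rule sum.swap)
  also have "\<dots> = dpair v (rmap r u)"
    using sym by (simp add: dpair_def rmap_def sum_distrib_left mult_ac tensor_symmetric_def)
  finally show ?thesis .
qed

lemma dpair_commute: "dpair u x = dpair x u"
  by (simp add: dpair_def mult.commute)

lemma bform_rmap_right:
  assumes "tensor_symmetric r" "bij (rmap r)"
  shows "bform r x (rmap r u) = dpair u x"
proof -
  have "bform r x (rmap r u) = dpair (rmap r (inv (rmap r) x)) u"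
    unfolding bform_def using assms(1) by (simp add: dpair_rmap_sym)
  also have "\<dots> = dpair u x"
    using assms(2) by (simp add: bij_is_surj surj_f_inv_f dpair_commute)
  finally show ?thesis .
qed

lemma all3_surj:
  assumes "surj f"
  shows "(\<forall>x y z. P x y z) \<longleftrightarrow> (\<forall>u v w. P (f v) (f w) (f u))"
proof
  assume images: "\<forall>u v w. P (f v) (f w) (f u)"
  show "\<forall>x y z. P x y z"
  proof (intro allI)
    fix x y z
    obtain v w u where "x = f v" "y = f w" "z = f u"
      using surjD[OF assms] by metis
    then show "P x y z" using images by simp
  qed
qed simp

lemma bform_identity_coordinates:
  assumes "bilinear_op prec" "bilinear_op succ" "tensor_symmetric r" "bij (rmap r)"
  shows "(\<forall>x y z. bform r (dstar prec succ x y) z = bform r y (prec z x) + bform r x (succ y z))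
    \<longleftrightarrow> (\<forall>u v w. trisum (\<lambda>a b c. dstar prec succ (rcol r b) (rcol r c) a) u v w
       = trisum (\<lambda>a b c. prec (rcol r a) (rcol r b) c + succ (rcol r c) (rcol r a) b) u v w)"
proof -
  let ?R = "rmap r"
  have "(\<forall>x y z. bform r (dstar prec succ x y) z = bform r y (prec z x) + bform r x (succ y z))
    \<longleftrightarrow> (\<forall>u v w. bform r (dstar prec succ (?R v) (?R w)) (?R u)
        = bform r (?R w) (prec (?R u) (?R v)) + bform r (?R v) (succ (?R w) (?R u)))"
    by (rule all3_surj[OF bij_is_surj[OF assms(4)]])
  also have "\<dots> \<longleftrightarrow> (\<forall>u v w. dpair u (dstar prec succ (?R v) (?R w))
        = dpair w (prec (?R u) (?R v)) + dpair v (succ (?R w) (?R u)))"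
    using assms(3,4) by (simp add: bform_rmap_left bform_rmap_right)
  also have "\<dots> \<longleftrightarrow> (\<forall>u v w. trisum (\<lambda>a b c. dstar prec succ (rcol r b) (rcol r c) a) u v w
       = trisum (\<lambda>a b c. prec (rcol r a) (rcol r b) c) u v w
         + trisum (\<lambda>a b c. succ (rcol r c) (rcol r a) b) u v w)"
  proof -
    have star: "dpair u (dstar prec succ (?R v) (?R w))
        = trisum (\<lambda>a b c. dstar prec succ (rcol r b) (rcol r c) a) u v w" for u v w
      using assms(1,2) by (simp add: dpair_bilinear_rmap bilinear_op_dstar)
    have prec: "dpair w (prec (?R u) (?R v)) = trisum (\<lambda>a b c. prec (rcol r a) (rcol r b) c) u v w"
      for u v w
      by (simp only: dpair_bilinear_rmap[OF assms(1)] trisum_rotate[of _ w u v])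
    have succ: "dpair v (succ (?R w) (?R u)) = trisum (\<lambda>a b c. succ (rcol r c) (rcol r a) b) u v w"
      for u v w
      by (simp only: dpair_bilinear_rmap[OF assms(2)] trisum_rotate[of _ v w u]
          trisum_rotate[of _ w u v])
    show ?thesis by (simp only: star prec succ)
  qed
  finally show ?thesis by (simp only: trisum_add)
qed

theorem theorem4p4p7:
  fixes prec succ :: "('n::finite \<Rightarrow> 'k::field) \<Rightarrow> ('n \<Rightarrow> 'k) \<Rightarrow> ('n \<Rightarrow> 'k)"
    and r :: "'n \<Rightarrow> 'n \<Rightarrow> 'k"
  assumes "dendriform prec succ"
    and "tensor_symmetric r"
    and "bij (rmap r)"
  shows "D_equation prec succ r \<longleftrightarrow>
    (\<forall>x y z. bform r (dstar prec succ x y) z = bform r y (prec z x) + bform r x (succ y z))"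
proof -
  have bil: "bilinear_op prec" "bilinear_op succ"
    using assms(1) by (auto simp: dendriform_def)
  have "D_equation prec succ r \<longleftrightarrow> (\<forall>a b c. dstar prec succ (rcol r b) (rcol r c) a
      = prec (rcol r a) (rcol r b) c + succ (rcol r c) (rcol r a) b)"
    using D_equation_coordinates[OF bil] rrow_eq_rcol[OF assms(2)] by simp
  also have "\<dots> \<longleftrightarrow> (\<forall>u v w. trisum (\<lambda>a b c. dstar prec succ (rcol r b) (rcol r c) a) u v w
       = trisum (\<lambda>a b c. prec (rcol r a) (rcol r b) c + succ (rcol r c) (rcol r a) b) u v w)"
    by (rule trisum_eq_iff[symmetric])
  also have "\<dots> \<longleftrightarrow>
    (\<forall>x y z. bform r (dstar prec succ x y) z = bform r y (prec z x) + bform r x (succ y z))"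
    by (rule bform_identity_coordinates[OF bil assms(2,3), symmetric])
  finally show ?thesis .
qed

end
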